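(* Let $\nu$ be a probability measure on $\Omega$ such that $I_\Lambda(\nu)=0$ for every finite set $\Lambda$ of edges of $\mathcal H$. Then $\nu$ is a Gibbs measure.
   Context: $\mathcal T$ is the triangular lattice on $\mathbb Z^2$ ($u\sim u\pm\hat e_i$, $\hat e_1=(1,0)$, $\hat e_2=(0,1)$, $\hat e_3=(-1,-1)$; $\hat e_3$ vertical), $\mathcal H$ its dual honeycomb lattice with edge set $\mathcal E$ (vertices of $\mathcal T$ are hexagonal faces of $\mathcal H$); $b_i(u)$ is the edge of $\mathcal H$ crossed by the $\mathcal T$-edge from $u$ to $u+\hat e_i$; type-3 (horizontal) dimers are "particles". $\Omega$ is the set of perfect matchings (dimer coverings) of $\mathcal H$ with the product topology and Borel $\sigma$-algebra. A probability measure $\lambda$ on $\Omega$ is a Gibbs measure if for every finite $\Lambda\subset\mathcal E$ and $\lambda$-a.e. configuration outside $\Lambda$, the conditional law of the configuration on $\Lambda$ is uniform on the finitely many configurations on $\Lambda$ compatible with it. Particle jumps: a particle at $b_3(v)$ moved by $+n\hat e_3$ goes to $b_3(v+n\hat e_3)$ crossing faces $v+k\hat e_3$, $k=1..n$; moved by $-n\hat e_3$ goes to $b_3(v-n\hat e_3)$ crossing faces $v-k\hat e_3$, $k=0..n-1$; the jump consists of successively performing, at the $n$ crossed faces, elementary rotations (replacing three alternate occupied edges of a hexagonal face by the other three), each being legal when performed. For finite $\Lambda\subset\mathcal E$, $\partial\Lambda$ is the set of edges not in $\Lambda$ sharing a vertex with an edge of $\Lambda$; $\Omega(\eta_{\partial\Lambda})$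 is the set of configurations $\eta_\Lambda$ on $\Lambda$ compatible with $\eta_{\partial\Lambda}$. A restricted move of length $n$ is a particle jump by $\pm n\hat e_3$ such that all edges of all $n$ crossed faces lie in $\Lambda$. For a probability measure $r$ on $\Omega$, with $r(\eta_\Lambda,\eta_{\partial\Lambda})$ the probability that the restrictions to $\Lambda,\partial\Lambda$ equal $\eta_\Lambda,\eta_{\partial\Lambda}$, $I_\Lambda(r)=\frac14\sum_{\eta_{\partial\Lambda}}\sum_{\eta_\Lambda,\eta'_\Lambda\in\Omega(\eta_{\partial\Lambda})}\frac{\mathbf 1\{\eta_\Lambda\to\eta'_\Lambda\text{ is a restricted move of length }n\}}{n}\big(\sqrt{r(\eta_\Lambda,\eta_{\partial\Lambda})}-\sqrt{r(\eta'_\Lambda,\eta_{\partial\Lambda})}\big)^2.$ *)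

theory Defs
  imports "HOL-Probability.Probability"
begin

text \<open>Vertices of T (= hexagonal faces of H) are points of Z^2.
  e1 = (1,0), e2 = (0,1), e3 = (-1,-1).\<close>

type_synonym pt = "int \<times> int"

datatype etype = Ty1 | Ty2 | Ty3

text \<open>An edge of H is b_i(u): the H-edge crossed by the T-edge from u to u + e_i.
  It is encoded as the pair (u, i).\<close>
type_synonym edge = "pt \<times> etype"

definition b1 :: "pt \<Rightarrow> edge" where "b1 u = (u, Ty1)"
definition b2 :: "pt \<Rightarrow> edge" where "b2 u = (u, Ty2)"
definition b3 :: "pt \<Rightarrow> edge" where "b3 u = (u, Ty3)"

text \<open>Vertices of H = triangular faces of T:
  VA u = triangle {u, u+(1,0), u+(1,1)},  VB u = triangle {u, u+(0,1), u+(1,1)}.\<close>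
datatype hvert = VA pt | VB pt

text \<open>Endpoints of an H-edge = the two triangles of T containing the crossing T-edge.\<close>
fun ends :: "edge \<Rightarrow> hvert set" where
  "ends ((x, y), Ty1) = {VA (x, y), VB (x, y - 1)}"
| "ends ((x, y), Ty2) = {VB (x, y), VA (x - 1, y)}"
| "ends ((x, y), Ty3) = {VA (x - 1, y - 1), VB (x - 1, y - 1)}"

type_synonym config = "edge \<Rightarrow> bool"

definition Omega :: "config set" where
  "Omega = {\<eta>. \<forall>v. \<exists>!e. \<eta> e \<and> v \<in> ends e}"

text \<open>Omega as a measurable space: the product (= Borel, for the product topology
  of the countable product of finite discrete spaces) sigma-algebra, restricted to Omega.\<close>
definition Omega_M :: "config measure" where
  "Omega_M = restrict_space (Pi\<^sub>M UNIV (\<lambda>_::edge. count_space (UNIV :: bool set))) Omega"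

definition glue :: "edge set \<Rightarrow> config \<Rightarrow> config \<Rightarrow> config" where
  "glue \<Lambda> \<xi> \<omega> = (\<lambda>e. if e \<in> \<Lambda> then \<xi> e else \<omega> e)"

definition compat_out :: "edge set \<Rightarrow> config \<Rightarrow> config set" where
  "compat_out \<Lambda> \<omega> = {\<xi> \<in> \<Lambda> \<rightarrow>\<^sub>E (UNIV :: bool set). glue \<Lambda> \<xi> \<omega> \<in> Omega}"

definition outside_alg :: "config measure \<Rightarrow> edge set \<Rightarrow> config measure" where
  "outside_alg M \<Lambda> = sigma (space M) {{\<omega> \<in> space M. \<omega> e} | e. e \<notin> \<Lambda>}"

definition gibbs :: "config measure \<Rightarrow> bool" where
  "gibbs M \<longleftrightarrow> prob_space M \<and> sets M = sets Omega_M \<and>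
     (\<forall>\<Lambda>. finite \<Lambda> \<longrightarrow> (\<forall>\<xi> \<in> \<Lambda> \<rightarrow>\<^sub>E (UNIV :: bool set).
        AE \<omega> in M. real_cond_exp M (outside_alg M \<Lambda>)
                     (indicator {\<omega>' \<in> space M. restrict \<omega>' \<Lambda> = \<xi>}) \<omega>
                 = (if \<xi> \<in> compat_out \<Lambda> \<omega> then 1 / real (card (compat_out \<Lambda> \<omega>)) else 0)))"

text \<open>The hexagonal face u of H has edges b1(u), b3(u+(1,1)), b2(u), b1(u-(1,0)), b3(u),
  b2(u-(0,1)) in cyclic order; its two alternating triples:\<close>
definition tri1 :: "pt \<Rightarrow> edge set" where
  "tri1 u = {b1 u, b2 u, b3 u}"
definition tri2 :: "pt \<Rightarrow> edge set" where
  "tri2 u = {b3 (fst u + 1, snd u + 1), b1 (fst u - 1, snd u), b2 (fst u, snd u - 1)}"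
definition face_edges :: "pt \<Rightarrow> edge set" where
  "face_edges u = tri1 u \<union> tri2 u"

definition rot :: "pt \<Rightarrow> config \<Rightarrow> config option" where
  "rot u \<eta> =
    (if (\<forall>e\<in>tri1 u. \<eta> e) \<and> (\<forall>e\<in>tri2 u. \<not> \<eta> e)
     then Some (\<lambda>e. if e \<in> tri1 u then False else if e \<in> tri2 u then True else \<eta> e)
     else if (\<forall>e\<in>tri2 u. \<eta> e) \<and> (\<forall>e\<in>tri1 u. \<not> \<eta> e)
     then Some (\<lambda>e. if e \<in> tri2 u then False else if e \<in> tri1 u then True else \<eta> e)
     else None)"

fun rots :: "pt list \<Rightarrow> config \<Rightarrow> config option" where
  "rots [] \<eta> = Some \<eta>"
| "rots (u # us) \<eta> = (case rot u \<eta> of None \<Rightarrow> None | Some \<eta>' \<Rightarrow> rots us \<eta>')"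

text \<open>Faces crossed by the jump of the particle at b3(v) by +n e3 (k = 1..n) and by
  -n e3 (k = 0..n-1), in the order in which they are crossed.\<close>
definition faces_plus :: "pt \<Rightarrow> nat \<Rightarrow> pt list" where
  "faces_plus v n = map (\<lambda>k. (fst v - int k, snd v - int k)) [1..<n+1]"
definition faces_minus :: "pt \<Rightarrow> nat \<Rightarrow> pt list" where
  "faces_minus v n = map (\<lambda>k. (fst v + int k, snd v + int k)) [0..<n]"

definition restricted_move :: "edge set \<Rightarrow> nat \<Rightarrow> config \<Rightarrow> config \<Rightarrow> bool" where
  "restricted_move \<Lambda> n \<xi> \<xi>' \<longleftrightarrow> n \<ge> 1 \<and>
     (\<exists>v fs. \<xi> (b3 v) \<and> (fs = faces_plus v n \<or> fs = faces_minus v n) \<and>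
            (\<forall>u \<in> set fs. face_edges u \<subseteq> \<Lambda>) \<and> rots fs \<xi> = Some \<xi>')"

definition bdry :: "edge set \<Rightarrow> edge set" where
  "bdry \<Lambda> = {e. e \<notin> \<Lambda> \<and> (\<exists>e' \<in> \<Lambda>. ends e \<inter> ends e' \<noteq> {})}"

definition compat_bdry :: "edge set \<Rightarrow> config \<Rightarrow> config set" where
  "compat_bdry \<Lambda> \<zeta> = {\<xi> \<in> \<Lambda> \<rightarrow>\<^sub>E (UNIV :: bool set).
      \<exists>\<omega> \<in> Omega. restrict \<omega> \<Lambda> = \<xi> \<and> restrict \<omega> (bdry \<Lambda>) = \<zeta>}"

definition rprob :: "config measure \<Rightarrow> edge set \<Rightarrow> config \<Rightarrow> config \<Rightarrow> real" where
  "rprob r \<Lambda> \<xi> \<zeta> = measure r {\<omega> \<in> space r. restrict \<omega> \<Lambda> = \<xi> \<and> restrict \<omega> (bdry \<Lambda>) = \<zeta>}"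

text \<open>Weight 1{xi -> xi' is a restricted move of length n}/n (summed over n; the length is
  determined by xi, xi').\<close>
definition move_weight :: "edge set \<Rightarrow> config \<Rightarrow> config \<Rightarrow> real" where
  "move_weight \<Lambda> \<xi> \<xi>' = (\<Sum>n \<in> {n. restricted_move \<Lambda> n \<xi> \<xi>'}. 1 / real n)"

definition I_fun :: "edge set \<Rightarrow> config measure \<Rightarrow> real" where
  "I_fun \<Lambda> r = 1/4 * (\<Sum>\<zeta> \<in> bdry \<Lambda> \<rightarrow>\<^sub>E (UNIV :: bool set).
      \<Sum>\<xi> \<in> compat_bdry \<Lambda> \<zeta>. \<Sum>\<xi>' \<in> compat_bdry \<Lambda> \<zeta>.
        move_weight \<Lambda> \<xi> \<xi>' * (sqrt (rprob r \<Lambda> \<xi> \<zeta>) - sqrt (rprob r \<Lambda> \<xi>' \<zeta>))\<^sup>2)"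

end

theory Submission
  imports Defs
begin

text \<open>A finite \<open>\<Lambda>\<close> lies inside a box \<open>B\<close> of faces; let \<open>L \<supseteq> \<Lambda>\<close> contain all edges of the
  faces of \<open>B\<close>. Two perfect matchings that agree away from the faces of \<open>B\<close> are connected by
  elementary rotations at faces of \<open>B\<close> (Thurston): their height functions can be normalised to
  agree outside \<open>B\<close> and to differ by multiples of 3 everywhere, and rotating a suitable local
  maximum of the larger one brings them closer. A rotation at a face inside \<open>L\<close> is a restricted
  move of length 1, so \<open>I\<^sub>L(\<nu>) = 0\<close> forces it to preserve the probability of the
  configuration on \<open>L \<union> \<partial>L\<close>. Hence, given the configuration on \<open>(L \<union> \<partial>L) - \<Lambda>\<close>, all
  configurations on \<open>\<Lambda>\<close> compatible with \<open>\<partial>\<Lambda>\<close> are equally likely, and a \<open>\<pi>\<close>-\<open>\<lambda>\<close> argument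
  over cylinder events outside \<open>\<Lambda>\<close> turns this into the uniform conditional law given the
  configuration outside \<open>\<Lambda>\<close>.\<close>

section \<open>Height functions\<close>

text \<open>Thurston's height function, scaled by 3: it increases by 1 along a T-edge crossing an
  empty edge of H and decreases by 2 along one crossing a dimer, so that its increments around
  a triangle of T sum to zero exactly when the corresponding vertex of H carries one dimer.
  The T-edge crossing \<open>e\<close> runs from \<open>fst e\<close> to \<open>edge_head e\<close>.\<close>

definition height_incr :: "config \<Rightarrow> edge \<Rightarrow> int" where
  "height_incr \<eta> e = (if \<eta> e then -2 else 1)"

fun edge_head :: "edge \<Rightarrow> pt" where
  "edge_head ((x, y), Ty1) = (x + 1, y)"
| "edge_head ((x, y), Ty2) = (x, y + 1)"
| "edge_head ((x, y), Ty3) = (x - 1, y - 1)"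

definition is_height :: "config \<Rightarrow> (pt \<Rightarrow> int) \<Rightarrow> bool" where
  "is_height \<eta> h \<longleftrightarrow> (\<forall>e. h (edge_head e) - h (fst e) = height_incr \<eta> e)"

lemma edge_head_neq_fst: "edge_head e \<noteq> fst e"
  by (cases e rule: edge_head.cases) auto

lemma height_incr_cases: "height_incr \<eta> e = 1 \<or> height_incr \<eta> e = -2"
  unfolding height_incr_def by auto

lemma is_heightI:
  assumes "\<And>x y. h (x + 1, y) - h (x, y) = height_incr \<eta> ((x, y), Ty1)"
    and "\<And>x y. h (x, y + 1) - h (x, y) = height_incr \<eta> ((x, y), Ty2)"
    and "\<And>x y. h (x - 1, y - 1) - h (x, y) = height_incr \<eta> ((x, y), Ty3)"
  shows "is_height \<eta> h"
  unfolding is_height_def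
proof
  fix e :: edge
  show "h (edge_head e) - h (fst e) = height_incr \<eta> e"
    using assms by (cases e rule: edge_head.cases) auto
qed

lemma is_heightD:
  assumes "is_height \<eta> h"
  shows "h (x + 1, y) - h (x, y) = height_incr \<eta> ((x, y), Ty1)"
    and "h (x, y + 1) - h (x, y) = height_incr \<eta> ((x, y), Ty2)"
    and "h (x - 1, y - 1) - h (x, y) = height_incr \<eta> ((x, y), Ty3)"
  using assms unfolding is_height_def
  by (metis edge_head.simps fst_conv)+

definition vertex_edges :: "hvert \<Rightarrow> edge set" where
  "vertex_edges v = (case v of
      VA (x, y) \<Rightarrow> {((x, y), Ty1), ((x + 1, y), Ty2), ((x + 1, y + 1), Ty3)}
    | VB (x, y) \<Rightarrow> {((x, y), Ty2), ((x, y + 1), Ty1), ((x + 1, y + 1), Ty3)})"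

lemma mem_ends_iff: "v \<in> ends e \<longleftrightarrow> e \<in> vertex_edges v"
  by (cases e rule: edge_head.cases; cases v) (auto simp: vertex_edges_def)

lemma ex1_three_iff_height_incr:
  assumes "p \<noteq> q" "q \<noteq> r" "p \<noteq> r"
  shows "(\<exists>!e. \<eta> e \<and> (e = p \<or> e = q \<or> e = r)) \<longleftrightarrow>
    height_incr \<eta> p + height_incr \<eta> q + height_incr \<eta> r = 0"
  using assms unfolding height_incr_def by (cases "\<eta> p"; cases "\<eta> q"; cases "\<eta> r") auto

lemma all_hvert_iff: "(\<forall>v. P v) \<longleftrightarrow> (\<forall>x y. P (VA (x, y)) \<and> P (VB (x, y)))"
  by (metis hvert.exhaust prod.exhaust)

lemma Omega_iff_height_incr:
  "\<eta> \<in> Omega \<longleftrightarrow> (\<forall>x y.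
     height_incr \<eta> ((x, y), Ty1) + height_incr \<eta> ((x + 1, y), Ty2)
       + height_incr \<eta> ((x + 1, y + 1), Ty3) = 0 \<and>
     height_incr \<eta> ((x, y), Ty2) + height_incr \<eta> ((x, y + 1), Ty1)
       + height_incr \<eta> ((x + 1, y + 1), Ty3) = 0)"
proof -
  have "\<eta> \<in> Omega \<longleftrightarrow> (\<forall>v. \<exists>!e. \<eta> e \<and> e \<in> vertex_edges v)"
    by (simp add: Omega_def mem_ends_iff)
  then show ?thesis
    unfolding all_hvert_iff by (simp add: vertex_edges_def ex1_three_iff_height_incr)
qed

lemma is_height_Omega:
  assumes h: "is_height \<eta> h"
  shows "\<eta> \<in> Omega"
  unfolding Omega_iff_height_incr
proof (intro allI conjI)
  fix x y
  note incr = is_heightD[OF h]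
  show "height_incr \<eta> ((x, y), Ty1) + height_incr \<eta> ((x + 1, y), Ty2)
      + height_incr \<eta> ((x + 1, y + 1), Ty3) = 0"
    using incr(1)[of x y] incr(2)[of "x + 1" y] incr(3)[of "x + 1" "y + 1"] by simp
  show "height_incr \<eta> ((x, y), Ty2) + height_incr \<eta> ((x, y + 1), Ty1)
      + height_incr \<eta> ((x + 1, y + 1), Ty3) = 0"
    using incr(2)[of x y] incr(1)[of x "y + 1"] incr(3)[of "x + 1" "y + 1"] by simp
qed

lemma int_shift_invariant_const:
  fixes f :: "int \<Rightarrow> 'a"
  assumes "\<And>k. f (k + 1) = f k"
  shows "f y = f 0"
proof (induct y rule: int_induct[where k = 0])
  case (step2 i)
  then show ?case using assms[of "i - 1"] by simp
qed (use assms in simp_all)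

definition signed_sum :: "(int \<Rightarrow> int) \<Rightarrow> int \<Rightarrow> int" where
  "signed_sum f y = (if 0 \<le> y then (\<Sum>k \<in> {0..<y}. f k) else - (\<Sum>k \<in> {y..<0}. f k))"

lemma signed_sum_0 [simp]: "signed_sum f 0 = 0"
  by (simp add: signed_sum_def)

lemma signed_sum_step: "signed_sum f (y + 1) - signed_sum f y = f y"
proof (cases "0 \<le> y")
  case True
  then have "{0..<y + 1} = insert y {0..<y}" by auto
  with True show ?thesis by (simp add: signed_sum_def)
next
  case False
  then have "{y..<0} = insert y {y + 1..<0}" by auto
  with False show ?thesis by (simp add: signed_sum_def)
qed

lemma Omega_imp_height:
  assumes "\<eta> \<in> Omega"
  obtains h where "is_height \<eta> h"
proof
  note tri = assms[unfolded Omega_iff_height_incr, rule_format]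
  define h where "h = (\<lambda>(x, y). signed_sum (\<lambda>k. height_incr \<eta> ((k, 0), Ty1)) x
                                + signed_sum (\<lambda>k. height_incr \<eta> ((x, k), Ty2)) y)"
  have step2: "h (x, y + 1) - h (x, y) = height_incr \<eta> ((x, y), Ty2)" for x y
    using signed_sum_step[of "\<lambda>k. height_incr \<eta> ((x, k), Ty2)" y] by (simp add: h_def)
  have step1: "h (x + 1, y) - h (x, y) = height_incr \<eta> ((x, y), Ty1)" for x y
  proof -
    define g where "g = (\<lambda>y. h (x + 1, y) - h (x, y) - height_incr \<eta> ((x, y), Ty1))"
    \<comment> \<open>the two triangles of T in the unit square at \<open>(x, k)\<close> make \<open>g\<close> invariant in \<open>k\<close>\<close>
    have "g (k + 1) = g k" for k
      using step2[of x k] step2[of "x + 1" k] tri[of x k] by (simp add: g_def)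
    then have "g y = g 0" by (rule int_shift_invariant_const)
    also have "g 0 = 0"
      using signed_sum_step[of "\<lambda>k. height_incr \<eta> ((k, 0), Ty1)" x] by (simp add: g_def h_def)
    finally show ?thesis by (simp add: g_def)
  qed
  have step3: "h (x - 1, y - 1) - h (x, y) = height_incr \<eta> ((x, y), Ty3)" for x y
    using tri[of "x - 1" "y - 1"] step1[of "x - 1" "y - 1"] step2[of x "y - 1"] by simp
  show "is_height \<eta> h" using step1 step2 step3 by (rule is_heightI)
qed

lemma Omega_iff_height: "\<eta> \<in> Omega \<longleftrightarrow> (\<exists>h. is_height \<eta> h)"
  using Omega_imp_height is_height_Omega by metis

lemma height_determines_config:
  assumes "is_height \<eta> h" "is_height \<eta>' h"
  shows "\<eta> = \<eta>'"
proof
  fix e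
  have "height_incr \<eta> e = height_incr \<eta>' e"
    using assms unfolding is_height_def by metis
  then show "\<eta> e = \<eta>' e" unfolding height_incr_def by (auto split: if_splits)
qed

section \<open>Elementary rotations\<close>

lemma mem_tri1_iff: "e \<in> tri1 u \<longleftrightarrow> fst e = u"
  by (cases e rule: edge_head.cases) (auto simp: tri1_def b1_def b2_def b3_def)

lemma mem_tri2_iff: "e \<in> tri2 u \<longleftrightarrow> edge_head e = u"
  by (cases e rule: edge_head.cases; cases u) (auto simp: tri2_def b1_def b2_def b3_def)

lemma mem_face_edges_iff: "e \<in> face_edges u \<longleftrightarrow> fst e = u \<or> edge_head e = u"
  by (simp add: face_edges_def mem_tri1_iff mem_tri2_iff)

definition flip_face :: "pt \<Rightarrow> config \<Rightarrow> config" where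
  "flip_face u \<eta> = (\<lambda>e. if e \<in> face_edges u then \<not> \<eta> e else \<eta> e)"

text \<open>The face \<open>u\<close> carries three alternate dimers, on the edges leaving \<open>u\<close> if \<open>b\<close>
  and on the edges entering \<open>u\<close> otherwise.\<close>

definition alternating :: "pt \<Rightarrow> config \<Rightarrow> bool \<Rightarrow> bool" where
  "alternating u \<eta> b \<longleftrightarrow> (\<forall>e\<in>tri1 u. \<eta> e = b) \<and> (\<forall>e\<in>tri2 u. \<eta> e = (\<not> b))"

lemma rot_eq: "rot u \<eta> = (if \<exists>b. alternating u \<eta> b then Some (flip_face u \<eta>) else None)"
proof -
  have disj: "e \<in> tri1 u \<Longrightarrow> e \<notin> tri2 u" for e
    by (metis mem_tri1_iff mem_tri2_iff edge_head_neq_fst)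
  have ne: "b3 u \<in> tri1 u" by (simp add: tri1_def)
  consider "alternating u \<eta> True" | "alternating u \<eta> False" | "\<nexists>b. alternating u \<eta> b"
    by (metis (full_types))
  then show ?thesis
  proof cases
    case 1
    then show ?thesis using disj
      by (auto simp: rot_def alternating_def flip_face_def face_edges_def fun_eq_iff)
  next
    case 2
    then show ?thesis using disj ne
      by (auto simp: rot_def alternating_def flip_face_def face_edges_def fun_eq_iff)
  next
    case 3
    then show ?thesis unfolding rot_def alternating_def by auto
  qed
qed

lemma rot_eq_Some_iff:
  "rot u \<eta> = Some \<eta>' \<longleftrightarrow> (\<exists>b. alternating u \<eta> b) \<and> \<eta>' = flip_face u \<eta>"
  by (auto simp: rot_eq)

lemma alternating_flip_face: "alternating u \<eta> b \<Longrightarrow> alternating u (flip_face u \<eta>) (\<not> b)"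
  by (auto simp: alternating_def flip_face_def face_edges_def)

lemma flip_face_flip_face [simp]: "flip_face u (flip_face u \<eta>) = \<eta>"
  by (auto simp: flip_face_def)

lemma rot_sym: "rot u \<eta> = Some \<eta>' \<Longrightarrow> rot u \<eta>' = Some \<eta>"
  by (metis rot_eq_Some_iff alternating_flip_face flip_face_flip_face)

lemma is_height_flip_face:
  assumes h: "is_height \<eta> h" and alt: "alternating u \<eta> b"
  shows "is_height (flip_face u \<eta>) (h(u := h u + (if b then -3 else 3)))"
  unfolding is_height_def
proof
  fix e
  have "h (edge_head e) - h (fst e) = height_incr \<eta> e"
    using h unfolding is_height_def by blast
  moreover have "fst e = u \<Longrightarrow> \<eta> e = b" "edge_head e = u \<Longrightarrow> \<eta> e = (\<not> b)"
    using alt by (auto simp: alternating_def mem_tri1_iff mem_tri2_iff)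
  ultimately show "(h(u := h u + (if b then -3 else 3))) (edge_head e)
      - (h(u := h u + (if b then -3 else 3))) (fst e) = height_incr (flip_face u \<eta>) e"
    using edge_head_neq_fst[of e]
    by (auto simp: flip_face_def mem_face_edges_iff height_incr_def)
qed

lemma rot_Omega: "\<eta> \<in> Omega \<Longrightarrow> rot u \<eta> = Some \<eta>' \<Longrightarrow> \<eta>' \<in> Omega"
  by (metis Omega_iff_height rot_eq_Some_iff is_height_flip_face)

lemma local_max_alternating:
  assumes h: "is_height \<eta> h"
    and out: "\<And>e. fst e = u \<Longrightarrow> h (edge_head e) < h u"
    and into: "\<And>e. edge_head e = u \<Longrightarrow> h (fst e) < h u"
  shows "alternating u \<eta> True"
  unfolding alternating_def
proof (intro conjI ballI)
  have incr: "h (edge_head e) - h (fst e) = height_incr \<eta> e" for e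
    using h unfolding is_height_def by blast
  show "\<eta> e = True" if "e \<in> tri1 u" for e
    using that out[of e] incr[of e] by (auto simp: mem_tri1_iff height_incr_def split: if_splits)
  show "\<eta> e = (\<not> True)" if "e \<in> tri2 u" for e
    using that into[of e] incr[of e] by (auto simp: mem_tri2_iff height_incr_def split: if_splits)
qed

section \<open>Connectivity under rotations\<close>

definition Box :: "int \<Rightarrow> pt set" where
  "Box N = {(x, y). \<bar>x\<bar> \<le> N \<and> \<bar>y\<bar> \<le> N}"

lemma finite_Box: "finite (Box N)"
proof (rule finite_subset)
  show "Box N \<subseteq> {-N..N} \<times> {-N..N}" by (auto simp: Box_def)
qed simp

definition box_rot :: "int \<Rightarrow> config \<Rightarrow> config \<Rightarrow> bool" where
  "box_rot N \<eta> \<eta>' \<longleftrightarrow> (\<exists>u\<in>Box N. rot u \<eta> = Some \<eta>')"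

lemma box_rot_sym: "box_rot N \<eta> \<eta>' \<Longrightarrow> box_rot N \<eta>' \<eta>"
  unfolding box_rot_def using rot_sym by blast

lemma box_rot_rtranclp_Omega: "(box_rot N)\<^sup>*\<^sup>* \<eta> \<eta>' \<Longrightarrow> \<eta> \<in> Omega \<Longrightarrow> \<eta>' \<in> Omega"
  by (induction rule: rtranclp_induct) (auto simp: box_rot_def intro: rot_Omega)

lemma const_outside_Box:
  assumes step: "\<And>e. fst e \<notin> Box N \<Longrightarrow> f (edge_head e) = f (fst e)"
    and "p \<notin> Box N" "q \<notin> Box N"
  shows "f p = f q"
proof -
  have row: "f (x, y) = f (0, y)" if "\<bar>y\<bar> > N" for x y
  proof (rule int_shift_invariant_const[of "\<lambda>k. f (k, y)"])
    show "f (k + 1, y) = f (k, y)" for k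
      using step[of "((k, y), Ty1)"] that by (simp add: Box_def)
  qed
  have col: "f (x, y) = f (x, 0)" if "\<bar>x\<bar> > N" for x y
  proof (rule int_shift_invariant_const[of "\<lambda>k. f (x, k)"])
    show "f (x, k + 1) = f (x, k)" for k
      using step[of "((x, k), Ty2)"] that by (simp add: Box_def)
  qed
  define K where "K = \<bar>N\<bar> + 1"
  have K: "\<bar>K\<bar> > N" by (simp add: K_def)
  have to_corner: "f p = f (K, K)" if "p \<notin> Box N" for p
  proof -
    obtain x y where p: "p = (x, y)" by fastforce
    from that consider "\<bar>x\<bar> > N" | "\<bar>y\<bar> > N" by (auto simp: p Box_def)
    then show ?thesis
    proof cases
      case 1
      have "f (x, y) = f (x, K)" using col[OF 1, of y] col[OF 1, of K] by simp
      also have "\<dots> = f (K, K)" using row[OF K, of x] row[OF K, of K] by simp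
      finally show ?thesis by (simp add: p)
    next
      case 2
      have "f (x, y) = f (K, y)" using row[OF 2, of x] row[OF 2, of K] by simp
      also have "\<dots> = f (K, K)" using col[OF K, of y] col[OF K, of K] by simp
      finally show ?thesis by (simp add: p)
    qed
  qed
  show ?thesis using to_corner[OF assms(2)] to_corner[OF assms(3)] by simp
qed

lemma height_diff_mod3_edge:
  assumes "is_height \<eta> h" "is_height \<eta>' h'"
  shows "(h (edge_head e) - h' (edge_head e)) mod 3 = (h (fst e) - h' (fst e)) mod 3"
proof -
  have "h (edge_head e) - h (fst e) = height_incr \<eta> e"
    and "h' (edge_head e) - h' (fst e) = height_incr \<eta>' e"
    using assms unfolding is_height_def by blast+
  then have "(h (edge_head e) - h' (edge_head e)) - (h (fst e) - h' (fst e))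
      = height_incr \<eta> e - height_incr \<eta>' e" by simp
  also have "\<dots> \<in> {0, 3, -3}"
    using height_incr_cases[of \<eta> e] height_incr_cases[of \<eta>' e] by auto
  finally show ?thesis by (auto simp: mod_eq_dvd_iff)
qed

lemma height_diff_mod3_const:
  assumes "is_height \<eta> h" "is_height \<eta>' h'"
  shows "(h p - h' p) mod 3 = (h q - h' q) mod 3"
proof (rule const_outside_Box[where N = "-1"])
  show "(h (edge_head e) - h' (edge_head e)) mod 3 = (h (fst e) - h' (fst e)) mod 3" for e
    using assms by (rule height_diff_mod3_edge)
qed (auto simp: Box_def)

definition height_dist :: "int \<Rightarrow> (pt \<Rightarrow> int) \<Rightarrow> (pt \<Rightarrow> int) \<Rightarrow> int" where
  "height_dist N h h' = (\<Sum>p\<in>Box N. \<bar>h p - h' p\<bar>)"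

lemma height_dist_nonneg: "height_dist N h h' \<ge> 0"
  by (simp add: height_dist_def sum_nonneg)

lemma height_dist_commute: "height_dist N h h' = height_dist N h' h"
  by (simp add: height_dist_def abs_minus_commute)

lemma exists_argmax_height_diff:
  fixes h h' :: "pt \<Rightarrow> int"
  assumes out: "\<And>p. p \<notin> Box N \<Longrightarrow> h p = h' p" and pos: "h p0 > h' p0"
  obtains u where "u \<in> Box N" "\<And>p. h p - h' p \<le> h u - h' u"
    "\<And>p. h p - h' p = h u - h' u \<Longrightarrow> h p \<le> h u"
proof -
  define d where "d p = h p - h' p" for p
  have "p0 \<in> Box N" using out[of p0] pos by fastforce
  define m where "m = Max (d ` Box N)"
  have d_le: "d p \<le> m" for p
  proof (cases "p \<in> Box N")
    case True
    then show ?thesis using finite_Box by (simp add: m_def)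
  next
    case False
    have "d p0 \<le> m" using \<open>p0 \<in> Box N\<close> finite_Box by (simp add: m_def)
    then show ?thesis using out[OF False] pos by (simp add: d_def)
  qed
  define M where "M = {p \<in> Box N. d p = m}"
  have "m \<in> d ` Box N"
    unfolding m_def using finite_Box \<open>p0 \<in> Box N\<close> by (intro Max_in) auto
  then have "finite M" "M \<noteq> {}"
    using finite_Box by (auto simp: M_def)
  then have "Max (h ` M) \<in> h ` M" by (intro Max_in) auto
  then obtain u where "u \<in> M" and hu: "h u = Max (h ` M)" by (metis imageE)
  have "p \<in> M" if "d p = m" for p
    using that out[of p] d_le[of p0] pos by (cases "p \<in> Box N") (auto simp: M_def d_def)
  then have "h p \<le> h u" if "d p = m" for p
    using that \<open>finite M\<close> by (simp add: hu)
  with \<open>u \<in> M\<close> d_le show thesis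
    by (intro that[of u]) (auto simp: M_def d_def)
qed

text \<open>If \<open>u\<close> maximises \<open>h - h'\<close>, and \<open>h\<close> among the maximisers, a neighbour \<open>w\<close> of \<open>u\<close>
  either has \<open>h w - h' w = h u - h' u\<close>, or, by the congruence mod 3,
  \<open>h w - h' w \<le> h u - h' u - 3\<close>, which beats the increment bound \<open>h' w - h' u \<le> 2\<close>;
  either way \<open>h w < h u\<close>.\<close>

lemma argmax_height_diff_alternating:
  assumes h: "is_height \<eta> h" and h': "is_height \<eta>' h'"
    and dvd3: "\<And>p. 3 dvd (h p - h' p)"
    and max_diff: "\<And>p. h p - h' p \<le> h u - h' u"
    and max_height: "\<And>p. h p - h' p = h u - h' u \<Longrightarrow> h p \<le> h u"
  shows "alternating u \<eta> True"
proof -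
  have below: "h w < h u" if "h w \<noteq> h u" "h' w - h' u \<le> 2" for w
  proof (cases "h w - h' w = h u - h' u")
    case True
    then show ?thesis using max_height[of w] that(1) by simp
  next
    case False
    have "3 dvd ((h u - h' u) - (h w - h' w))" using dvd3[of u] dvd3[of w] by simp
    then have "h w - h' w \<le> h u - h' u - 3"
      using False max_diff[of w] by (auto elim!: dvdE; presburger)
    then show ?thesis using that(2) by simp
  qed
  have incr: "h (edge_head e) - h (fst e) = height_incr \<eta> e"
    "h' (edge_head e) - h' (fst e) = height_incr \<eta>' e" for e
    using h h' unfolding is_height_def by blast+
  show ?thesis
  proof (rule local_max_alternating[OF h])
    show "h (edge_head e) < h u" if "fst e = u" for e
      using below[of "edge_head e"] incr[of e] height_incr_cases[of \<eta> e]
        height_incr_cases[of \<eta>' e] that by auto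
    show "h (fst e) < h u" if "edge_head e = u" for e
      using below[of "fst e"] incr[of e] height_incr_cases[of \<eta> e]
        height_incr_cases[of \<eta>' e] that by auto
  qed
qed

lemma exists_local_max_above:
  assumes h: "is_height \<eta> h" and h': "is_height \<eta>' h'"
    and out: "\<And>p. p \<notin> Box N \<Longrightarrow> h p = h' p"
    and dvd3: "\<And>p. 3 dvd (h p - h' p)"
    and pos: "h p0 > h' p0"
  obtains u where "u \<in> Box N" "h u - h' u \<ge> 3" "alternating u \<eta> True"
proof -
  obtain u where u: "u \<in> Box N" "\<And>p. h p - h' p \<le> h u - h' u"
    "\<And>p. h p - h' p = h u - h' u \<Longrightarrow> h p \<le> h u"
    using exists_argmax_height_diff[of N h h' p0, OF out pos] by blast
  have "h u - h' u > 0" using u(2)[of p0] pos by simp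
  with dvd3[of u] have "h u - h' u \<ge> 3" by (auto elim!: dvdE)
  with u argmax_height_diff_alternating[OF h h' dvd3] show thesis
    using that by blast
qed

lemma descent_step:
  assumes h: "is_height \<eta> h" and h': "is_height \<eta>' h'"
    and out: "\<And>p. p \<notin> Box N \<Longrightarrow> h p = h' p"
    and dvd3: "\<And>p. 3 dvd (h p - h' p)"
    and pos: "h p0 > h' p0"
  obtains \<eta>1 h1 where "box_rot N \<eta> \<eta>1" "is_height \<eta>1 h1"
    "\<And>p. p \<notin> Box N \<Longrightarrow> h1 p = h' p" "\<And>p. 3 dvd (h1 p - h' p)"
    "height_dist N h1 h' < height_dist N h h'"
proof -
  obtain u where u: "u \<in> Box N" "h u - h' u \<ge> 3" "alternating u \<eta> True"
    using exists_local_max_above[OF assms] .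
  define h1 where "h1 = h(u := h u - 3)"
  have "box_rot N \<eta> (flip_face u \<eta>)"
    using u by (auto simp: box_rot_def rot_eq_Some_iff)
  moreover have "is_height (flip_face u \<eta>) h1"
    using is_height_flip_face[OF h u(3)] by (simp add: h1_def)
  moreover have "h1 p = h' p" if "p \<notin> Box N" for p
    using out[OF that] u(1) that by (auto simp: h1_def)
  moreover have "3 dvd (h1 p - h' p)" for p
  proof (cases "p = u")
    case True
    then have "h1 p - h' p = (h u - h' u) - 3" by (simp add: h1_def)
    then show ?thesis using dvd_diff[OF dvd3[of u] dvd_refl[of 3]] by (simp only:)
  qed (use dvd3 in \<open>simp add: h1_def\<close>)
  moreover have "height_dist N h1 h' < height_dist N h h'"
    unfolding height_dist_def
    by (rule sum_strict_mono_ex1[OF finite_Box]) (use u in \<open>auto simp: h1_def\<close>)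
  ultimately show thesis by (rule that)
qed

lemma box_rot_connected_heights:
  assumes "is_height \<eta> h" "is_height \<eta>' h'"
    and "\<And>p. p \<notin> Box N \<Longrightarrow> h p = h' p"
    and "\<And>p. 3 dvd (h p - h' p)"
  shows "(box_rot N)\<^sup>*\<^sup>* \<eta> \<eta>'"
  using assms
proof (induction "nat (height_dist N h h')" arbitrary: \<eta> h \<eta>' h' rule: less_induct)
  case less
  show ?case
  proof (cases "h = h'")
    case True
    then show ?thesis using less.prems height_determines_config by blast
  next
    case False
    then obtain p0 where "h p0 \<noteq> h' p0" by (auto simp: fun_eq_iff)
    then consider "h p0 > h' p0" | "h' p0 > h p0" by linarith
    then show ?thesis
    proof cases
      case 1
      obtain \<eta>1 h1 where step: "box_rot N \<eta> \<eta>1" and h1: "is_height \<eta>1 h1"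
        "\<And>p. p \<notin> Box N \<Longrightarrow> h1 p = h' p" "\<And>p. 3 dvd (h1 p - h' p)"
        and closer: "height_dist N h1 h' < height_dist N h h'"
        using descent_step[OF less.prems 1] by blast
      have "(box_rot N)\<^sup>*\<^sup>* \<eta>1 \<eta>'"
        using closer height_dist_nonneg[of N h1 h']
        by (intro less.hyps[OF _ h1(1) less.prems(2) h1(2,3)]) simp
      with step show ?thesis by (rule converse_rtranclp_into_rtranclp)
    next
      case 2
      have out': "p \<notin> Box N \<Longrightarrow> h' p = h p" and dvd': "3 dvd (h' p - h p)" for p
        using less.prems(3,4)[of p] by (auto simp: dvd_diff_commute)
      obtain \<eta>1 h1 where step: "box_rot N \<eta>' \<eta>1" and h1: "is_height \<eta>1 h1"
        and out1: "\<And>p. p \<notin> Box N \<Longrightarrow> h1 p = h p" and dvd1: "\<And>p. 3 dvd (h1 p - h p)"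
        and closer: "height_dist N h1 h < height_dist N h' h"
        using descent_step[OF less.prems(2,1) out' dvd' 2] by blast
      have "(box_rot N)\<^sup>*\<^sup>* \<eta> \<eta>1"
      proof (rule less.hyps[OF _ less.prems(1) h1])
        show "nat (height_dist N h h1) < nat (height_dist N h h')"
          using closer height_dist_nonneg[of N h h1] by (simp add: height_dist_commute)
        show "h p = h1 p" if "p \<notin> Box N" for p using out1[OF that] by simp
        show "3 dvd (h p - h1 p)" for p using dvd1[of p] by (simp add: dvd_diff_commute)
      qed
      with box_rot_sym[OF step] show ?thesis by (meson rtranclp.rtrancl_into_rtrancl)
    qed
  qed
qed

lemma box_rot_connected:
  assumes "\<omega> \<in> Omega" "\<omega>' \<in> Omega" and agree: "\<And>e. fst e \<notin> Box N \<Longrightarrow> \<omega> e = \<omega>' e"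
  shows "(box_rot N)\<^sup>*\<^sup>* \<omega> \<omega>'"
proof -
  obtain h h0 where h: "is_height \<omega> h" and h0: "is_height \<omega>' h0"
    using assms(1,2) Omega_imp_height by metis
  define K where "K = (\<bar>N\<bar> + 1, \<bar>N\<bar> + 1)"
  have K: "K \<notin> Box N" by (simp add: K_def Box_def)
  define h' where "h' p = h0 p + (h K - h0 K)" for p
  have h': "is_height \<omega>' h'" using h0 by (simp add: is_height_def h'_def)
  have diff_const: "h p - h0 p = h K - h0 K" if "p \<notin> Box N" for p
  proof (rule const_outside_Box[OF _ that K])
    fix e :: edge assume "fst e \<notin> Box N"
    have "h (edge_head e) - h (fst e) = height_incr \<omega> e"
      "h0 (edge_head e) - h0 (fst e) = height_incr \<omega>' e"
      using h h0 unfolding is_height_def by blast+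
    then show "h (edge_head e) - h0 (edge_head e) = h (fst e) - h0 (fst e)"
      using agree[OF \<open>fst e \<notin> Box N\<close>] by (simp add: height_incr_def)
  qed
  have "h p = h' p" if "p \<notin> Box N" for p
    using diff_const[OF that] by (simp add: h'_def)
  moreover have "3 dvd (h p - h' p)" for p
    using height_diff_mod3_const[OF h h', of p K] by (simp add: h'_def mod_eq_0_iff_dvd)
  ultimately show ?thesis by (rule box_rot_connected_heights[OF h h'])
qed

lemma restrict_eq_restrict_iff: "restrict f A = restrict g A \<longleftrightarrow> (\<forall>x\<in>A. f x = g x)"
  by (metis restrict_apply' restrict_ext)

lemma restrict_eq_iff: "restrict f A = g \<longleftrightarrow> g \<in> extensional A \<and> (\<forall>x\<in>A. f x = g x)"
  by (metis extensional_restrict restrict_eq_restrict_iff restrict_apply' restrict_extensional)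

lemma bdry_disjoint: "bdry \<Lambda> \<inter> \<Lambda> = {}"
  by (auto simp: bdry_def)

lemma finite_bdry:
  assumes "finite \<Lambda>"
  shows "finite (bdry \<Lambda>)"
proof (rule finite_subset)
  show "bdry \<Lambda> \<subseteq> (\<Union>e\<in>\<Lambda>. \<Union>v\<in>ends e. vertex_edges v)"
    by (auto simp: bdry_def mem_ends_iff)
  have "finite (ends e)" "finite (vertex_edges v)" for e v
    by (cases e rule: edge_head.cases; simp) (auto simp: vertex_edges_def split: hvert.split)
  with assms show "finite (\<Union>e\<in>\<Lambda>. \<Union>v\<in>ends e. vertex_edges v)" by blast
qed

text \<open>Whether a matching can be modified inside \<open>\<Lambda>\<close> only depends on its values on \<open>\<partial>\<Lambda>\<close>:
  every vertex of H touched by \<open>\<Lambda>\<close> has all its edges in \<open>\<Lambda> \<union> \<partial>\<Lambda>\<close>.\<close>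

lemma glue_Omega:
  assumes "\<omega> \<in> Omega" "\<omega>' \<in> Omega" "\<forall>e\<in>bdry \<Lambda>. \<omega> e = \<omega>' e"
  shows "glue \<Lambda> (restrict \<omega>' \<Lambda>) \<omega> \<in> Omega"
  unfolding Omega_def
proof (intro CollectI allI)
  fix v
  let ?g = "glue \<Lambda> (restrict \<omega>' \<Lambda>) \<omega>"
  show "\<exists>!e. ?g e \<and> v \<in> ends e"
  proof (cases "\<exists>e'\<in>\<Lambda>. v \<in> ends e'")
    case True
    have "?g e = \<omega>' e" if "v \<in> ends e" for e
    proof (cases "e \<in> \<Lambda>")
      case False
      then have "e \<in> bdry \<Lambda>" using True that unfolding bdry_def by blast
      then show ?thesis using assms(3) False by (simp add: glue_def)
    qed (simp add: glue_def)
    then have "(\<lambda>e. ?g e \<and> v \<in> ends e) = (\<lambda>e. \<omega>' e \<and> v \<in> ends e)" by auto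
    then show ?thesis using assms(2) by (simp add: Omega_def)
  next
    case False
    then have "(\<lambda>e. ?g e \<and> v \<in> ends e) = (\<lambda>e. \<omega> e \<and> v \<in> ends e)"
      by (auto simp: glue_def)
    then show ?thesis using assms(1) by (simp add: Omega_def)
  qed
qed

lemma compat_out_eq_compat_bdry:
  assumes "\<omega> \<in> Omega"
  shows "compat_out \<Lambda> \<omega> = compat_bdry \<Lambda> (restrict \<omega> (bdry \<Lambda>))"
proof (intro set_eqI iffI)
  fix \<xi> assume "\<xi> \<in> compat_out \<Lambda> \<omega>"
  then have \<xi>: "\<xi> \<in> \<Lambda> \<rightarrow>\<^sub>E UNIV" "glue \<Lambda> \<xi> \<omega> \<in> Omega" by (auto simp: compat_out_def)
  moreover have "restrict (glue \<Lambda> \<xi> \<omega>) \<Lambda> = \<xi>"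
    using \<xi>(1) by (auto simp: restrict_eq_iff glue_def PiE_iff)
  moreover have "restrict (glue \<Lambda> \<xi> \<omega>) (bdry \<Lambda>) = restrict \<omega> (bdry \<Lambda>)"
    using bdry_disjoint[of \<Lambda>] by (auto simp: restrict_eq_restrict_iff glue_def)
  ultimately show "\<xi> \<in> compat_bdry \<Lambda> (restrict \<omega> (bdry \<Lambda>))"
    unfolding compat_bdry_def by blast
next
  fix \<xi> assume "\<xi> \<in> compat_bdry \<Lambda> (restrict \<omega> (bdry \<Lambda>))"
  then obtain \<omega>' where "\<xi> \<in> \<Lambda> \<rightarrow>\<^sub>E UNIV" "\<omega>' \<in> Omega" "restrict \<omega>' \<Lambda> = \<xi>"
      "restrict \<omega>' (bdry \<Lambda>) = restrict \<omega> (bdry \<Lambda>)"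
    unfolding compat_bdry_def by blast
  with glue_Omega[OF assms] show "\<xi> \<in> compat_out \<Lambda> \<omega>"
    by (auto simp: compat_out_def restrict_eq_restrict_iff)
qed

lemma finite_compat_bdry: "finite \<Lambda> \<Longrightarrow> finite (compat_bdry \<Lambda> \<zeta>)"
  by (rule finite_subset[of _ "\<Lambda> \<rightarrow>\<^sub>E UNIV"]) (auto simp: compat_bdry_def intro!: finite_PiE)

lemma restricted_move_le_card:
  assumes "restricted_move \<Lambda> n \<xi> \<xi>'" "finite \<Lambda>"
  shows "n \<le> card \<Lambda>"
proof -
  obtain v fs where fs: "fs = faces_plus v n \<or> fs = faces_minus v n"
    and sub: "\<forall>u\<in>set fs. face_edges u \<subseteq> \<Lambda>"
    using assms(1) unfolding restricted_move_def by blast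
  have "card (set fs) = n"
    using fs
  proof
    assume "fs = faces_plus v n"
    then have "set fs = (\<lambda>k::nat. (fst v - int k, snd v - int k)) ` {1..<n+1}"
      by (simp only: faces_plus_def set_map set_upt)
    moreover have "inj_on (\<lambda>k::nat. (fst v - int k, snd v - int k)) {1..<n+1}"
      by (auto intro!: inj_onI)
    ultimately show ?thesis by (simp add: card_image)
  next
    assume "fs = faces_minus v n"
    then have "set fs = (\<lambda>k::nat. (fst v + int k, snd v + int k)) ` {0..<n}"
      by (simp only: faces_minus_def set_map set_upt)
    moreover have "inj_on (\<lambda>k::nat. (fst v + int k, snd v + int k)) {0..<n}"
      by (auto intro!: inj_onI)
    ultimately show ?thesis by (simp add: card_image)
  qed
  moreover have "card (b1 ` set fs) = card (set fs)"
    by (rule card_image) (simp add: inj_on_def b1_def)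
  moreover have "b1 ` set fs \<subseteq> \<Lambda>"
    using sub by (auto simp: face_edges_def tri1_def)
  then have "card (b1 ` set fs) \<le> card \<Lambda>"
    by (rule card_mono[OF assms(2)])
  ultimately show ?thesis by simp
qed

lemma move_weight_ge_1:
  assumes "restricted_move \<Lambda> 1 \<xi> \<xi>'" "finite \<Lambda>"
  shows "move_weight \<Lambda> \<xi> \<xi>' \<ge> 1"
proof -
  have "{n. restricted_move \<Lambda> n \<xi> \<xi>'} \<subseteq> {..card \<Lambda>}"
    using restricted_move_le_card[OF _ assms(2)] by blast
  then have "finite {n. restricted_move \<Lambda> n \<xi> \<xi>'}"
    by (rule finite_subset) simp
  then have "1 / real (1::nat) \<le> (\<Sum>n \<in> {n. restricted_move \<Lambda> n \<xi> \<xi>'}. 1 / real n)"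
    by (rule member_le_sum[rotated 2]) (use assms(1) in auto)
  then show ?thesis by (simp add: move_weight_def)
qed

lemma rot_restrict:
  assumes "face_edges u \<subseteq> L" "rot u \<eta> = Some \<eta>'"
  shows "rot u (restrict \<eta> L) = Some (restrict \<eta>' L)"
proof -
  from assms(2) obtain b where alt: "alternating u \<eta> b" and \<eta>': "\<eta>' = flip_face u \<eta>"
    by (auto simp: rot_eq_Some_iff)
  have "alternating u (restrict \<eta> L) b"
    using alt assms(1) by (auto simp: alternating_def face_edges_def)
  moreover have "flip_face u (restrict \<eta> L) = restrict \<eta>' L"
    using assms(1) unfolding \<eta>' by (intro ext) (auto simp: flip_face_def)
  ultimately show ?thesis by (auto simp: rot_eq_Some_iff)
qed

text \<open>A rotation at a face inside \<open>L\<close> is a restricted move of length 1: it jumps the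
  horizontal dimer of the face, \<open>b\<^sub>3(u)\<close> or \<open>b\<^sub>3(u + (1, 1))\<close>, across the face.\<close>

lemma rot_restricted_move:
  assumes "face_edges u \<subseteq> L" "rot u \<eta> = Some \<eta>'"
  shows "restricted_move L 1 (restrict \<eta> L) (restrict \<eta>' L)"
proof -
  have rots: "rots [u] (restrict \<eta> L) = Some (restrict \<eta>' L)"
    using rot_restrict[OF assms] by simp
  from assms(2) obtain b where alt: "alternating u \<eta> b" by (auto simp: rot_eq_Some_iff)
  show ?thesis
  proof (cases b)
    case True
    then have "restrict \<eta> L (b3 u)"
      using alt assms(1) by (auto simp: alternating_def face_edges_def tri1_def)
    moreover have "faces_minus u 1 = [u]" by (simp add: faces_minus_def)
    ultimately show ?thesis
      using rots assms(1) unfolding restricted_move_def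
      by (intro conjI exI[of _ u] exI[of _ "[u]"]) auto
  next
    case False
    define v where "v = (fst u + 1, snd u + 1)"
    have "restrict \<eta> L (b3 v)"
      using alt assms(1) False by (auto simp: alternating_def face_edges_def tri2_def v_def)
    moreover have "faces_plus v 1 = [u]" by (simp add: faces_plus_def v_def)
    ultimately show ?thesis
      using rots assms(1) unfolding restricted_move_def
      by (intro conjI exI[of _ v] exI[of _ "[u]"]) auto
  qed
qed

definition Box_faces :: "int \<Rightarrow> edge set" where
  "Box_faces N = (\<Union>u\<in>Box N. face_edges u)"

lemma finite_Box_faces: "finite (Box_faces N)"
  using finite_Box by (auto simp: Box_faces_def face_edges_def tri1_def tri2_def)

lemma finite_imp_in_Box:
  assumes "finite \<Lambda>"
  obtains N where "\<And>e. e \<in> \<Lambda> \<Longrightarrow> fst e \<in> Box N"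
proof
  define N where "N = (\<Sum>e\<in>\<Lambda>. \<bar>fst (fst e)\<bar> + \<bar>snd (fst e)\<bar>)"
  fix e assume "e \<in> \<Lambda>"
  then have "\<bar>fst (fst e)\<bar> + \<bar>snd (fst e)\<bar> \<le> N"
    unfolding N_def using assms by (intro member_le_sum) auto
  then show "fst e \<in> Box N" by (cases "fst e") (auto simp: Box_def)
qed

section \<open>Cylinder events\<close>

definition cylinder :: "('a \<Rightarrow> 'b) measure \<Rightarrow> 'a set \<Rightarrow> ('a \<Rightarrow> 'b) \<Rightarrow> ('a \<Rightarrow> 'b) set" where
  "cylinder M C \<rho> = {\<omega> \<in> space M. restrict \<omega> C = \<rho>}"

lemma cylinder_Int_space [simp]: "cylinder M C \<rho> \<inter> space M = cylinder M C \<rho>"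
  by (auto simp: cylinder_def)

lemma sets_coordinate_constraints:
  assumes "finite C" "\<And>e b. e \<in> C \<Longrightarrow> {\<omega> \<in> space M. \<omega> e = b} \<in> sets M"
  shows "{\<omega> \<in> space M. \<forall>e\<in>C. \<omega> e = \<beta> e} \<in> sets M"
  using assms
proof (induction C rule: finite_induct)
  case (insert a C)
  have "{\<omega> \<in> space M. \<forall>e\<in>insert a C. \<omega> e = \<beta> e} =
        {\<omega> \<in> space M. \<omega> a = \<beta> a} \<inter> {\<omega> \<in> space M. \<forall>e\<in>C. \<omega> e = \<beta> e}" by auto
  with insert show ?case by auto
qed simp

lemma sets_cylinder:
  assumes "finite C" "\<And>e b. e \<in> C \<Longrightarrow> {\<omega> \<in> space M. \<omega> e = b} \<in> sets M"
  shows "cylinder M C \<rho> \<in> sets M"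
proof (cases "\<rho> \<in> extensional C")
  case True
  then have "cylinder M C \<rho> = {\<omega> \<in> space M. \<forall>e\<in>C. \<omega> e = \<rho> e}"
    by (auto simp: cylinder_def restrict_eq_iff)
  with sets_coordinate_constraints[OF assms] show ?thesis by simp
next
  case False
  then have "cylinder M C \<rho> = {}" by (auto simp: cylinder_def restrict_eq_iff)
  then show ?thesis by simp
qed

lemma integral_fun_of_restrict:
  fixes M :: "('a \<Rightarrow> 'b::finite) measure" and F :: "('a \<Rightarrow> 'b) \<Rightarrow> real"
  assumes "finite_measure M" and V: "finite V" "\<And>\<rho>. cylinder M V \<rho> \<in> sets M" and B: "B \<in> sets M"
  shows "(\<integral>\<omega>. F (restrict \<omega> V) * indicator B \<omega> \<partial>M)
    = (\<Sum>\<rho>\<in>V \<rightarrow>\<^sub>E UNIV. F \<rho> * measure M (cylinder M V \<rho> \<inter> B))"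
proof -
  have "F (restrict \<omega> V) * indicator B \<omega>
      = (\<Sum>\<rho>\<in>V \<rightarrow>\<^sub>E UNIV. F \<rho> * indicator (cylinder M V \<rho> \<inter> B) \<omega>)" if "\<omega> \<in> space M" for \<omega>
  proof -
    have "(\<Sum>\<rho>\<in>V \<rightarrow>\<^sub>E UNIV. F \<rho> * indicator (cylinder M V \<rho> \<inter> B) \<omega>)
        = (\<Sum>\<rho>\<in>V \<rightarrow>\<^sub>E UNIV. if \<rho> = restrict \<omega> V then F \<rho> * indicator B \<omega> else 0)"
      using that by (intro sum.cong) (auto simp: cylinder_def indicator_def)
    then show ?thesis using V(1) by (simp add: sum.delta finite_PiE)
  qed
  then have "(\<integral>\<omega>. F (restrict \<omega> V) * indicator B \<omega> \<partial>M)
      = (\<integral>\<omega>. (\<Sum>\<rho>\<in>V \<rightarrow>\<^sub>E UNIV. F \<rho> * indicator (cylinder M V \<rho> \<inter> B) \<omega>) \<partial>M)"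
    by (rule Bochner_Integration.integral_cong[OF refl])
  also have "\<dots> = (\<Sum>\<rho>\<in>V \<rightarrow>\<^sub>E UNIV. F \<rho> * measure M (cylinder M V \<rho> \<inter> B))"
  proof (subst Bochner_Integration.integral_sum)
    have "emeasure M (cylinder M V \<rho> \<inter> B) < \<infinity>" for \<rho>
      using finite_measure.emeasure_finite[OF assms(1)] by (simp add: less_top[symmetric])
    then show "integrable M (\<lambda>\<omega>. F \<rho> * indicator (cylinder M V \<rho> \<inter> B) \<omega>)" for \<rho>
      using V B by (intro integrable_mult_right integrable_real_indicator) auto
  qed (auto simp: cylinder_def intro!: sum.cong arg_cong[of _ _ "measure M"])
  finally show ?thesis .
qed

lemma measurable_fun_of_restrict:
  fixes M :: "('a \<Rightarrow> 'b::finite) measure" and F :: "('a \<Rightarrow> 'b) \<Rightarrow> real"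
  assumes "finite V" "\<And>\<rho>. cylinder M V \<rho> \<in> sets M"
  shows "(\<lambda>\<omega>. F (restrict \<omega> V)) \<in> borel_measurable M"
proof (rule measurable_compose[where f = "\<lambda>\<omega>. restrict \<omega> V" and g = F])
  have "(\<lambda>\<omega>. restrict \<omega> V) -` {\<rho>} \<inter> space M = cylinder M V \<rho>" for \<rho>
    by (auto simp: cylinder_def)
  then show "(\<lambda>\<omega>. restrict \<omega> V) \<in> measurable M (count_space (V \<rightarrow>\<^sub>E UNIV))"
    using assms by (simp add: measurable_count_space_eq2 finite_PiE)
qed (simp add: measurable_count_space_eq1)

definition outside_cylinders :: "config measure \<Rightarrow> edge set \<Rightarrow> config set set" where
  "outside_cylinders M \<Lambda> =
    {{\<omega> \<in> space M. \<forall>e\<in>C. \<omega> e = \<beta> e} | C \<beta>. finite C \<and> C \<inter> \<Lambda> = {}} \<union> {{}}"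

lemma space_outside_alg [simp]: "space (outside_alg M \<Lambda>) = space M"
  by (auto simp: outside_alg_def space_measure_of_conv)

lemma sets_outside_alg:
  "sets (outside_alg M \<Lambda>) = sigma_sets (space M) {{\<omega> \<in> space M. \<omega> e} | e. e \<notin> \<Lambda>}"
  unfolding outside_alg_def by (rule sets_measure_of) auto

lemma edge_event_outside_alg:
  assumes "e \<notin> \<Lambda>"
  shows "{\<omega> \<in> space M. \<omega> e = b} \<in> sets (outside_alg M \<Lambda>)"
proof -
  have occ: "{\<omega> \<in> space M. \<omega> e} \<in> sets (outside_alg M \<Lambda>)"
    using assms unfolding sets_outside_alg by (intro sigma_sets.Basic) blast
  show ?thesis
  proof (cases b)
    case False
    have "space M - {\<omega> \<in> space M. \<omega> e} \<in> sets (outside_alg M \<Lambda>)"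
      using sets.compl_sets[OF occ] by simp
    moreover have "space M - {\<omega> \<in> space M. \<omega> e} = {\<omega> \<in> space M. \<omega> e = b}"
      using False by auto
    ultimately show ?thesis by simp
  qed (use occ in simp)
qed

lemma sigma_sets_outside_cylinders:
  "sigma_sets (space M) (outside_cylinders M \<Lambda>) = sets (outside_alg M \<Lambda>)"
  unfolding sets_outside_alg
proof (rule sigma_sets_eqI)
  fix A assume "A \<in> outside_cylinders M \<Lambda>"
  then have "A = {} \<or> (\<exists>C \<beta>. A = {\<omega> \<in> space M. \<forall>e\<in>C. \<omega> e = \<beta> e} \<and> finite C \<and> C \<inter> \<Lambda> = {})"
    by (auto simp: outside_cylinders_def)
  then consider "A = {}"
    | C \<beta> where "A = {\<omega> \<in> space M. \<forall>e\<in>C. \<omega> e = \<beta> e}" "finite C" "C \<inter> \<Lambda> = {}"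
    by blast
  then show "A \<in> sigma_sets (space M) {{\<omega> \<in> space M. \<omega> e} | e. e \<notin> \<Lambda>}"
  proof cases
    case 2
    have "{\<omega> \<in> space (outside_alg M \<Lambda>). \<forall>e\<in>C. \<omega> e = \<beta> e} \<in> sets (outside_alg M \<Lambda>)"
    proof (rule sets_coordinate_constraints)
      fix e b assume "e \<in> C"
      then have "e \<notin> \<Lambda>" using 2(3) by blast
      then show "{\<omega> \<in> space (outside_alg M \<Lambda>). \<omega> e = b} \<in> sets (outside_alg M \<Lambda>)"
        using edge_event_outside_alg by simp
    qed (fact 2(2))
    then show ?thesis using 2(1) by (simp add: sets_outside_alg)
  qed (simp add: sigma_sets.Empty)
next
  fix A assume "A \<in> {{\<omega> \<in> space M. \<omega> e} | e. e \<notin> \<Lambda>}"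
  then obtain e where e: "A = {\<omega> \<in> space M. \<omega> e}" "e \<notin> \<Lambda>" by blast
  then have "A = {\<omega> \<in> space M. \<forall>e'\<in>{e}. \<omega> e' = (\<lambda>_. True) e'}" by simp
  with e(2) have "A \<in> outside_cylinders M \<Lambda>"
    unfolding outside_cylinders_def by (intro UnI1 CollectI exI[of _ "{e}"] exI conjI) auto
  then show "A \<in> sigma_sets (space M) (outside_cylinders M \<Lambda>)" by (rule sigma_sets.Basic)
qed

lemma Int_stable_outside_cylinders: "Int_stable (outside_cylinders M \<Lambda>)"
proof (rule Int_stableI)
  fix A B assume "A \<in> outside_cylinders M \<Lambda>" "B \<in> outside_cylinders M \<Lambda>"
  then have "A = {} \<or> B = {} \<or> (\<exists>C1 \<beta>1 C2 \<beta>2. A = {\<omega> \<in> space M. \<forall>e\<in>C1. \<omega> e = \<beta>1 e} \<and>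
      B = {\<omega> \<in> space M. \<forall>e\<in>C2. \<omega> e = \<beta>2 e} \<and>
      finite C1 \<and> C1 \<inter> \<Lambda> = {} \<and> finite C2 \<and> C2 \<inter> \<Lambda> = {})"
    by (auto simp: outside_cylinders_def)
  then consider "A = {} \<or> B = {}"
    | C1 \<beta>1 C2 \<beta>2 where "A = {\<omega> \<in> space M. \<forall>e\<in>C1. \<omega> e = \<beta>1 e}"
        "B = {\<omega> \<in> space M. \<forall>e\<in>C2. \<omega> e = \<beta>2 e}"
        "finite C1" "C1 \<inter> \<Lambda> = {}" "finite C2" "C2 \<inter> \<Lambda> = {}"
    by blast
  then show "A \<inter> B \<in> outside_cylinders M \<Lambda>"
  proof cases
    case 2
    show ?thesis
    proof (cases "\<forall>e\<in>C1 \<inter> C2. \<beta>1 e = \<beta>2 e")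
      case True
      define \<gamma> where "\<gamma> e = (if e \<in> C1 then \<beta>1 e else \<beta>2 e)" for e
      have "A \<inter> B = {\<omega> \<in> space M. \<forall>e\<in>C1 \<union> C2. \<omega> e = \<gamma> e}"
        using 2(1,2) True by (auto simp: \<gamma>_def)
      moreover have "finite (C1 \<union> C2)" "(C1 \<union> C2) \<inter> \<Lambda> = {}" using 2 by auto
      ultimately show ?thesis
        unfolding outside_cylinders_def by (intro UnI1 CollectI exI conjI)
    next
      case False
      then have "A \<inter> B = {}" using 2(1,2) by auto
      then show ?thesis by (simp add: outside_cylinders_def)
    qed
  qed (auto simp: outside_cylinders_def)
qed

lemma emeasure_density_eq_integral:
  fixes h :: "'a \<Rightarrow> real"
  assumes "integrable M h" "\<And>x. 0 \<le> h x" "B \<in> sets M"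
  shows "emeasure (density M h) B = ennreal (\<integral>x. indicator B x * h x \<partial>M)"
proof -
  have "emeasure (density M h) B = (\<integral>\<^sup>+x. ennreal (indicator B x * h x) \<partial>M)"
    using assms by (subst emeasure_density) (auto intro!: nn_integral_cong simp: indicator_def)
  also have "\<dots> = ennreal (\<integral>x. indicator B x * h x \<partial>M)"
    using assms integrable_real_mult_indicator[of B M h]
    by (intro nn_integral_eq_integral) (auto simp: mult.commute)
  finally show ?thesis .
qed

text \<open>Dynkin's \<open>\<pi>\<close>-\<open>\<lambda>\<close> argument, run on the finite measures with densities \<open>f\<close> and \<open>g\<close>.\<close>

lemma integral_indicator_eq_sigma_sets:
  fixes f g :: "'a \<Rightarrow> real"
  assumes G: "Int_stable G" "G \<subseteq> sets M" "space M \<in> G"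
    and f: "integrable M f" "\<And>x. 0 \<le> f x" and g: "integrable M g" "\<And>x. 0 \<le> g x"
    and eq: "\<And>A. A \<in> G \<Longrightarrow> (\<integral>x. indicator A x * f x \<partial>M) = (\<integral>x. indicator A x * g x \<partial>M)"
    and A: "A \<in> sigma_sets (space M) G"
  shows "(\<integral>x. indicator A x * f x \<partial>M) = (\<integral>x. indicator A x * g x \<partial>M)"
proof -
  have sub: "sigma_sets (space M) G \<subseteq> sets M"
    using G(2) by (rule sets.sigma_sets_subset)
  have "G \<subseteq> Pow (space M)" using G(2) sets.sets_into_space by blast
  from G(1) this A have "emeasure (density M f) A = emeasure (density M g) A"
  proof (induction rule: sigma_sets_induct_disjoint)
    case (basic A)
    then show ?case using G(2) eq[OF basic] by (simp add: emeasure_density_eq_integral f g subsetD)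
  next
    case (compl A)
    have "A \<in> sets M" using compl(1) sub by blast
    have diff: "emeasure (density M h) (space M - A)
        = emeasure (density M h) (space M) - emeasure (density M h) A"
      if "integrable M h" "\<And>x. 0 \<le> h x" for h
      using emeasure_compl[of A "density M h"] emeasure_density_eq_integral[OF that \<open>A \<in> sets M\<close>]
        \<open>A \<in> sets M\<close> by simp
    show ?case
      using compl(2) eq[OF G(3)] emeasure_density_eq_integral[OF f sets.top]
        emeasure_density_eq_integral[OF g sets.top]
      by (simp add: diff[OF f] diff[OF g])
  next
    case (union A)
    then have "range A \<subseteq> sets M" using sub by blast
    with union show ?case by (simp add: suminf_emeasure[symmetric])
  qed simp
  moreover have "A \<in> sets M" using A sub by blast
  ultimately show ?thesis
    using f g by (simp add: emeasure_density_eq_integral integral_nonneg_AE ennreal_inj)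
qed

section \<open>Measures with vanishing \<open>I\<close>\<close>

definition uniform_spec :: "edge set \<Rightarrow> config \<Rightarrow> config \<Rightarrow> real" where
  "uniform_spec \<Lambda> \<xi> \<zeta> =
    (if \<xi> \<in> compat_bdry \<Lambda> \<zeta> then 1 / real (card (compat_bdry \<Lambda> \<zeta>)) else 0)"

lemma uniform_spec_nonneg: "0 \<le> uniform_spec \<Lambda> \<xi> \<zeta>"
  by (simp add: uniform_spec_def)

lemma uniform_spec_le_1: "uniform_spec \<Lambda> \<xi> \<zeta> \<le> 1"
  by (cases "card (compat_bdry \<Lambda> \<zeta>)") (auto simp: uniform_spec_def divide_simps)

locale I_vanishing = prob_space \<nu> for \<nu> :: "config measure" +
  assumes sets_eq: "sets \<nu> = sets Omega_M"
    and I_fun_zero: "\<And>\<Lambda>. finite \<Lambda> \<Longrightarrow> I_fun \<Lambda> \<nu> = 0"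
begin

lemma space_eq: "space \<nu> = Omega"
  using sets_eq_imp_space_eq[OF sets_eq]
  by (simp add: Omega_M_def space_restrict_space space_PiM)

lemma sets_edge_event: "{\<omega> \<in> space \<nu>. \<omega> e = b} \<in> sets \<nu>"
proof -
  have "(\<lambda>\<omega>. \<omega> e) \<in> measurable Omega_M (count_space UNIV)"
    unfolding Omega_M_def
    by (rule measurable_restrict_space1) (rule measurable_component_singleton, simp)
  then have "(\<lambda>\<omega>. \<omega> e) \<in> measurable \<nu> (count_space UNIV)"
    using measurable_cong_sets[OF sets_eq refl] by blast
  from measurable_sets[OF this, of "{b}"] show ?thesis
    by (simp add: vimage_def Int_def conj_commute)
qed

lemma sets_cylinder_finite: "finite C \<Longrightarrow> cylinder \<nu> C \<rho> \<in> sets \<nu>"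
  by (rule sets_cylinder) (simp_all add: sets_edge_event)

lemma rprob_eq_cylinders:
  "rprob \<nu> \<Lambda> \<xi> \<zeta> = measure \<nu> (cylinder \<nu> \<Lambda> \<xi> \<inter> cylinder \<nu> (bdry \<Lambda>) \<zeta>)"
  unfolding rprob_def cylinder_def by (rule arg_cong[of _ _ "measure \<nu>"]) auto

text \<open>All summands of \<open>I\<^sub>\<Lambda>(\<nu>)\<close> are nonnegative, and a move of length 1 carries weight at
  least 1.\<close>

lemma rprob_eq_of_move:
  assumes L: "finite L" and \<zeta>: "\<zeta> \<in> bdry L \<rightarrow>\<^sub>E UNIV"
    and \<xi>: "\<xi> \<in> compat_bdry L \<zeta>" "\<xi>' \<in> compat_bdry L \<zeta>"
    and move: "restricted_move L 1 \<xi> \<xi>'"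
  shows "rprob \<nu> L \<xi> \<zeta> = rprob \<nu> L \<xi>' \<zeta>"
proof -
  define t where "t \<zeta> \<xi> \<xi>' = move_weight L \<xi> \<xi>' * (sqrt (rprob \<nu> L \<xi> \<zeta>) - sqrt (rprob \<nu> L \<xi>' \<zeta>))\<^sup>2"
    for \<zeta> \<xi> \<xi>'
  have t_nonneg: "t z a b \<ge> 0" for z a b
    unfolding t_def move_weight_def by (intro mult_nonneg_nonneg sum_nonneg) auto
  have "(\<Sum>\<zeta> \<in> bdry L \<rightarrow>\<^sub>E UNIV. \<Sum>\<xi> \<in> compat_bdry L \<zeta>. \<Sum>\<xi>' \<in> compat_bdry L \<zeta>. t \<zeta> \<xi> \<xi>') = 0"
    using I_fun_zero[OF L] by (simp add: I_fun_def t_def)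
  moreover have "finite (bdry L \<rightarrow>\<^sub>E (UNIV :: bool set))"
    using finite_bdry[OF L] by (intro finite_PiE) auto
  ultimately have "t \<zeta> \<xi> \<xi>' = 0"
    using \<zeta> \<xi> finite_compat_bdry[OF L] t_nonneg
    by (simp add: sum_nonneg_eq_0_iff sum_nonneg)
  moreover have "move_weight L \<xi> \<xi>' \<ge> 1" by (rule move_weight_ge_1[OF move L])
  ultimately show ?thesis by (simp add: t_def)
qed

lemma rprob_box_rot_invariant:
  assumes L: "finite L" "Box_faces N \<subseteq> L" and \<eta>: "\<eta> \<in> Omega"
    and "(box_rot N)\<^sup>*\<^sup>* \<eta> \<eta>'"
  shows "rprob \<nu> L (restrict \<eta> L) (restrict \<eta> (bdry L))
       = rprob \<nu> L (restrict \<eta>' L) (restrict \<eta>' (bdry L))"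
  using assms(4)
proof (induction rule: rtranclp_induct)
  case (step \<eta>1 \<eta>2)
  obtain u where u: "u \<in> Box N" and rot: "rot u \<eta>1 = Some \<eta>2"
    using step(2) by (auto simp: box_rot_def)
  have face: "face_edges u \<subseteq> L" using u L(2) by (auto simp: Box_faces_def)
  have "\<eta>1 \<in> Omega" "\<eta>2 \<in> Omega"
    using box_rot_rtranclp_Omega[OF step(1) \<eta>] rot_Omega rot by blast+
  have same_bdry: "restrict \<eta>2 (bdry L) = restrict \<eta>1 (bdry L)"
    using rot face bdry_disjoint[of L]
    by (auto simp: restrict_eq_restrict_iff rot_eq_Some_iff flip_face_def)
  have "restrict \<eta>1 L \<in> compat_bdry L (restrict \<eta>1 (bdry L))"
    "restrict \<eta>2 L \<in> compat_bdry L (restrict \<eta>1 (bdry L))"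
    using \<open>\<eta>1 \<in> Omega\<close> \<open>\<eta>2 \<in> Omega\<close> same_bdry by (auto simp: compat_bdry_def)
  then have "rprob \<nu> L (restrict \<eta>1 L) (restrict \<eta>1 (bdry L))
      = rprob \<nu> L (restrict \<eta>2 L) (restrict \<eta>1 (bdry L))"
    by (intro rprob_eq_of_move[OF L(1)] rot_restricted_move[OF face rot]) auto
  with step.IH show ?case by (simp only: same_bdry)
qed simp

end

context I_vanishing
begin

context
  fixes \<Lambda> L :: "edge set" and N :: int
  assumes finite_L: "finite L" and \<Lambda>_subset: "\<Lambda> \<subseteq> L" and faces_subset: "Box_faces N \<subseteq> L"
    and \<Lambda>_in_Box: "\<And>e. e \<in> \<Lambda> \<Longrightarrow> fst e \<in> Box N"
begin

abbreviation V :: "edge set" where "V \<equiv> (L \<union> bdry L) - \<Lambda>"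

lemma bdry_subset_V: "bdry \<Lambda> \<subseteq> V"
  using \<Lambda>_subset by (auto simp: bdry_def)

lemma restrict_V_bdry: "restrict \<omega> V = \<rho> \<Longrightarrow> restrict \<omega> (bdry \<Lambda>) = restrict \<rho> (bdry \<Lambda>)"
  using bdry_subset_V by (auto simp: Int_absorb1)

lemma cylinders_L_bdry_eq:
  "cylinder \<nu> L (restrict \<omega> L) \<inter> cylinder \<nu> (bdry L) (restrict \<omega> (bdry L))
     = cylinder \<nu> V (restrict \<omega> V) \<inter> cylinder \<nu> \<Lambda> (restrict \<omega> \<Lambda>)"
  using \<Lambda>_subset by (auto simp: cylinder_def restrict_eq_restrict_iff)

lemma measure_cylinder_eq_of_witness:
  assumes \<omega>1: "\<omega>1 \<in> cylinder \<nu> V \<rho> \<inter> cylinder \<nu> \<Lambda> \<xi>1"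
    and \<xi>2: "\<xi>2 \<in> compat_bdry \<Lambda> (restrict \<rho> (bdry \<Lambda>))"
  shows "measure \<nu> (cylinder \<nu> V \<rho> \<inter> cylinder \<nu> \<Lambda> \<xi>1)
       = measure \<nu> (cylinder \<nu> V \<rho> \<inter> cylinder \<nu> \<Lambda> \<xi>2)"
proof -
  have "\<omega>1 \<in> Omega" and V1: "restrict \<omega>1 V = \<rho>" and \<Lambda>1: "restrict \<omega>1 \<Lambda> = \<xi>1"
    using \<omega>1 by (auto simp: cylinder_def space_eq)
  define \<omega>2 where "\<omega>2 = glue \<Lambda> \<xi>2 \<omega>1"
  have "\<xi>2 \<in> compat_out \<Lambda> \<omega>1"
    using \<xi>2 restrict_V_bdry[OF V1] compat_out_eq_compat_bdry[OF \<open>\<omega>1 \<in> Omega\<close>] by simp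
  then have "\<omega>2 \<in> Omega" and "\<xi>2 \<in> \<Lambda> \<rightarrow>\<^sub>E UNIV"
    by (auto simp: compat_out_def \<omega>2_def)
  then have V2: "restrict \<omega>2 V = \<rho>" and \<Lambda>2: "restrict \<omega>2 \<Lambda> = \<xi>2"
    using V1 by (auto simp: \<omega>2_def glue_def restrict_eq_iff PiE_iff)
  have "(box_rot N)\<^sup>*\<^sup>* \<omega>1 \<omega>2"
    using \<open>\<omega>1 \<in> Omega\<close> \<open>\<omega>2 \<in> Omega\<close> \<Lambda>_in_Box
    by (intro box_rot_connected) (auto simp: \<omega>2_def glue_def)
  then have "rprob \<nu> L (restrict \<omega>1 L) (restrict \<omega>1 (bdry L))
      = rprob \<nu> L (restrict \<omega>2 L) (restrict \<omega>2 (bdry L))"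
    by (rule rprob_box_rot_invariant[OF finite_L faces_subset \<open>\<omega>1 \<in> Omega\<close>])
  then show ?thesis
    by (simp add: rprob_eq_cylinders cylinders_L_bdry_eq V1 \<Lambda>1 V2 \<Lambda>2)
qed

lemma cylinder_incompatible_empty:
  assumes "\<xi> \<notin> compat_bdry \<Lambda> (restrict \<rho> (bdry \<Lambda>))"
  shows "cylinder \<nu> V \<rho> \<inter> cylinder \<nu> \<Lambda> \<xi> = {}"
proof (rule ccontr)
  assume "cylinder \<nu> V \<rho> \<inter> cylinder \<nu> \<Lambda> \<xi> \<noteq> {}"
  then obtain \<omega> where \<omega>: "\<omega> \<in> Omega" "restrict \<omega> V = \<rho>" "restrict \<omega> \<Lambda> = \<xi>"
    by (auto simp: cylinder_def space_eq)
  moreover have "restrict \<omega> (bdry \<Lambda>) = restrict \<rho> (bdry \<Lambda>)"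
    by (rule restrict_V_bdry[OF \<omega>(2)])
  ultimately have "\<xi> \<in> compat_bdry \<Lambda> (restrict \<rho> (bdry \<Lambda>))"
    unfolding compat_bdry_def by auto
  with assms show False by contradiction
qed

lemma measure_cylinder_compat_eq:
  assumes "\<xi>1 \<in> compat_bdry \<Lambda> (restrict \<rho> (bdry \<Lambda>))" "\<xi>2 \<in> compat_bdry \<Lambda> (restrict \<rho> (bdry \<Lambda>))"
  shows "measure \<nu> (cylinder \<nu> V \<rho> \<inter> cylinder \<nu> \<Lambda> \<xi>1)
       = measure \<nu> (cylinder \<nu> V \<rho> \<inter> cylinder \<nu> \<Lambda> \<xi>2)"
proof (cases "cylinder \<nu> V \<rho> \<inter> cylinder \<nu> \<Lambda> \<xi>1 = {}")
  case True
  show ?thesis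
  proof (cases "cylinder \<nu> V \<rho> \<inter> cylinder \<nu> \<Lambda> \<xi>2 = {}")
    case False
    then obtain \<omega> where "\<omega> \<in> cylinder \<nu> V \<rho> \<inter> cylinder \<nu> \<Lambda> \<xi>2" by blast
    from measure_cylinder_eq_of_witness[OF this assms(1)] show ?thesis by simp
  qed (simp add: True)
next
  case False
  then obtain \<omega> where "\<omega> \<in> cylinder \<nu> V \<rho> \<inter> cylinder \<nu> \<Lambda> \<xi>1" by blast
  from measure_cylinder_eq_of_witness[OF this assms(2)] show ?thesis .
qed

lemma measure_cylinder_uniform:
  "measure \<nu> (cylinder \<nu> V \<rho> \<inter> cylinder \<nu> \<Lambda> \<xi>)
     = uniform_spec \<Lambda> \<xi> (restrict \<rho> (bdry \<Lambda>)) * measure \<nu> (cylinder \<nu> V \<rho>)"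
proof -
  define K where "K = compat_bdry \<Lambda> (restrict \<rho> (bdry \<Lambda>))"
  have "finite \<Lambda>" using finite_L \<Lambda>_subset by (rule rev_finite_subset)
  have "finite V" by (simp add: finite_L finite_bdry)
  have K_subset: "K \<subseteq> \<Lambda> \<rightarrow>\<^sub>E UNIV" by (auto simp: K_def compat_bdry_def)
  have "measure \<nu> (cylinder \<nu> V \<rho>) = (\<integral>\<omega>. indicator (cylinder \<nu> V \<rho>) \<omega> \<partial>\<nu>)"
    by (auto simp: cylinder_def intro!: arg_cong[of _ _ "measure \<nu>"])
  also have "\<dots> = (\<Sum>\<xi>'\<in>\<Lambda> \<rightarrow>\<^sub>E UNIV. measure \<nu> (cylinder \<nu> \<Lambda> \<xi>' \<inter> cylinder \<nu> V \<rho>))"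
    using integral_fun_of_restrict[OF finite_measure_axioms \<open>finite \<Lambda>\<close>
        sets_cylinder_finite[OF \<open>finite \<Lambda>\<close>] sets_cylinder_finite[OF \<open>finite V\<close>], of "\<lambda>_. 1"]
    by simp
  also have "\<dots> = (\<Sum>\<xi>'\<in>K. measure \<nu> (cylinder \<nu> V \<rho> \<inter> cylinder \<nu> \<Lambda> \<xi>'))"
    using \<open>finite \<Lambda>\<close> K_subset cylinder_incompatible_empty
    by (intro sum.mono_neutral_cong_right) (auto simp: K_def Int_commute finite_PiE)
  finally have total: "measure \<nu> (cylinder \<nu> V \<rho>)
      = (\<Sum>\<xi>'\<in>K. measure \<nu> (cylinder \<nu> V \<rho> \<inter> cylinder \<nu> \<Lambda> \<xi>'))" .
  show ?thesis
  proof (cases "\<xi> \<in> K")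
    case True
    have "measure \<nu> (cylinder \<nu> V \<rho>) = (\<Sum>\<xi>'\<in>K. measure \<nu> (cylinder \<nu> V \<rho> \<inter> cylinder \<nu> \<Lambda> \<xi>))"
      unfolding total using True
      by (intro sum.cong refl measure_cylinder_compat_eq) (simp_all add: K_def)
    then have "measure \<nu> (cylinder \<nu> V \<rho>) = card K * measure \<nu> (cylinder \<nu> V \<rho> \<inter> cylinder \<nu> \<Lambda> \<xi>)"
      by simp
    moreover have "card K > 0"
      using True finite_compat_bdry[OF \<open>finite \<Lambda>\<close>] by (auto simp: K_def card_gt_0_iff)
    ultimately show ?thesis using True by (simp add: uniform_spec_def K_def)
  next
    case False
    then show ?thesis using cylinder_incompatible_empty by (simp add: uniform_spec_def K_def)
  qed
qed

end

end

context I_vanishing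
begin

lemma integral_cylinder_uniform_spec:
  fixes \<beta> :: config
  assumes "finite \<Lambda>" "finite C" "C \<inter> \<Lambda> = {}"
  defines "A \<equiv> {\<omega> \<in> space \<nu>. \<forall>e\<in>C. \<omega> e = \<beta> e}"
  shows "(\<integral>\<omega>. indicator A \<omega> * indicator (cylinder \<nu> \<Lambda> \<xi>) \<omega> \<partial>\<nu>)
       = (\<integral>\<omega>. indicator A \<omega> * uniform_spec \<Lambda> \<xi> (restrict \<omega> (bdry \<Lambda>)) \<partial>\<nu>)"
proof -
  obtain N where \<Lambda>_in_Box: "\<And>e. e \<in> \<Lambda> \<Longrightarrow> fst e \<in> Box N"
    using finite_imp_in_Box[OF assms(1)] by blast
  define L where "L = \<Lambda> \<union> C \<union> Box_faces N"
  define V where "V = (L \<union> bdry L) - \<Lambda>"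
  have "\<Lambda> \<subseteq> L" "Box_faces N \<subseteq> L" by (auto simp: L_def)
  have "finite L" using assms(1,2) finite_Box_faces by (simp add: L_def)
  then have "finite V" by (simp add: V_def finite_bdry)
  have "C \<subseteq> V" "bdry \<Lambda> \<subseteq> V"
    using assms(3) by (auto simp: V_def L_def bdry_def)
  define a :: "config \<Rightarrow> real" where "a \<rho> = (if \<forall>e\<in>C. \<rho> e = \<beta> e then 1 else 0)" for \<rho>
  have A_eq: "indicator A \<omega> = a (restrict \<omega> V)" if "\<omega> \<in> space \<nu>" for \<omega>
    using that \<open>C \<subseteq> V\<close> by (auto simp: A_def a_def indicator_def)
  have V_bdry: "V \<inter> bdry \<Lambda> = bdry \<Lambda>" using \<open>bdry \<Lambda> \<subseteq> V\<close> by blast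
  note fun_of_restrict = integral_fun_of_restrict[OF finite_measure_axioms \<open>finite V\<close>
      sets_cylinder_finite[OF \<open>finite V\<close>]]
  have "(\<integral>\<omega>. indicator A \<omega> * indicator (cylinder \<nu> \<Lambda> \<xi>) \<omega> \<partial>\<nu>)
      = (\<integral>\<omega>. a (restrict \<omega> V) * indicator (cylinder \<nu> \<Lambda> \<xi>) \<omega> \<partial>\<nu>)"
    by (intro Bochner_Integration.integral_cong) (simp_all add: A_eq)
  also have "\<dots> = (\<Sum>\<rho>\<in>V \<rightarrow>\<^sub>E UNIV. a \<rho> * measure \<nu> (cylinder \<nu> V \<rho> \<inter> cylinder \<nu> \<Lambda> \<xi>))"
    by (rule fun_of_restrict[OF sets_cylinder_finite[OF assms(1)]])
  also have "\<dots> = (\<Sum>\<rho>\<in>V \<rightarrow>\<^sub>E UNIV. (a \<rho> * uniform_spec \<Lambda> \<xi> (restrict \<rho> (bdry \<Lambda>)))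
      * measure \<nu> (cylinder \<nu> V \<rho> \<inter> space \<nu>))"
    using measure_cylinder_uniform[OF \<open>finite L\<close> \<open>\<Lambda> \<subseteq> L\<close> \<open>Box_faces N \<subseteq> L\<close> \<Lambda>_in_Box]
    by (simp add: V_def mult.assoc)
  also have "\<dots> = (\<integral>\<omega>. a (restrict \<omega> V) * uniform_spec \<Lambda> \<xi> (restrict (restrict \<omega> V) (bdry \<Lambda>))
      * indicator (space \<nu>) \<omega> \<partial>\<nu>)"
    by (rule fun_of_restrict[symmetric]) simp
  also have "\<dots> = (\<integral>\<omega>. indicator A \<omega> * uniform_spec \<Lambda> \<xi> (restrict \<omega> (bdry \<Lambda>)) \<partial>\<nu>)"
    by (intro Bochner_Integration.integral_cong) (simp_all add: A_eq V_bdry)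
  finally show ?thesis .
qed

lemma outside_cylinders_subset_sets: "outside_cylinders \<nu> \<Lambda> \<subseteq> sets \<nu>"
proof
  fix B assume "B \<in> outside_cylinders \<nu> \<Lambda>"
  then have "B = {} \<or> (\<exists>C \<beta>. B = {\<omega> \<in> space \<nu>. \<forall>e\<in>C. \<omega> e = \<beta> e} \<and> finite C)"
    by (auto simp: outside_cylinders_def)
  then show "B \<in> sets \<nu>"
    using sets_coordinate_constraints[OF _ sets_edge_event] by auto
qed

lemma subalgebra_outside_alg: "subalgebra \<nu> (outside_alg \<nu> \<Lambda>)"
  unfolding subalgebra_def sigma_sets_outside_cylinders[symmetric]
  using outside_cylinders_subset_sets by (simp add: sets.sigma_sets_subset)

lemma uniform_spec_measurable:
  assumes "finite \<Lambda>"
  shows "(\<lambda>\<omega>. uniform_spec \<Lambda> \<xi> (restrict \<omega> (bdry \<Lambda>))) \<in> borel_measurable (outside_alg \<nu> \<Lambda>)"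
proof (rule measurable_fun_of_restrict)
  show "finite (bdry \<Lambda>)" using assms by (rule finite_bdry)
  show "cylinder (outside_alg \<nu> \<Lambda>) (bdry \<Lambda>) \<rho> \<in> sets (outside_alg \<nu> \<Lambda>)" for \<rho>
  proof (rule sets_cylinder[OF finite_bdry[OF assms]])
    fix e b assume "e \<in> bdry \<Lambda>"
    then have "e \<notin> \<Lambda>" using bdry_disjoint by blast
    then show "{\<omega> \<in> space (outside_alg \<nu> \<Lambda>). \<omega> e = b} \<in> sets (outside_alg \<nu> \<Lambda>)"
      using edge_event_outside_alg by simp
  qed
qed

lemma cond_exp_cylinder:
  assumes "finite \<Lambda>"
  shows "AE \<omega> in \<nu>. real_cond_exp \<nu> (outside_alg \<nu> \<Lambda>) (indicator (cylinder \<nu> \<Lambda> \<xi>)) \<omega>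
                     = uniform_spec \<Lambda> \<xi> (restrict \<omega> (bdry \<Lambda>))"
proof -
  interpret finite_measure_subalgebra \<nu> "outside_alg \<nu> \<Lambda>"
    by unfold_locales (rule subalgebra_outside_alg)
  let ?g = "\<lambda>\<omega>. uniform_spec \<Lambda> \<xi> (restrict \<omega> (bdry \<Lambda>))"
  have g_meas: "?g \<in> borel_measurable \<nu>"
    using uniform_spec_measurable[OF assms] by (rule measurable_from_subalg[OF subalg])
  have cyl_int: "integrable \<nu> (indicator (cylinder \<nu> \<Lambda> \<xi>) :: config \<Rightarrow> real)"
    using sets_cylinder_finite[OF assms] by (simp add: emeasure_finite less_top[symmetric])
  have g_int: "integrable \<nu> ?g"
    using g_meas uniform_spec_nonneg uniform_spec_le_1
    by (intro integrable_const_bound[where B = 1]) auto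
  have "(\<integral>x. indicator A x * indicator (cylinder \<nu> \<Lambda> \<xi>) x \<partial>\<nu>) = (\<integral>x. indicator A x * ?g x \<partial>\<nu>)"
    if "A \<in> sets (outside_alg \<nu> \<Lambda>)" for A
  proof (rule integral_indicator_eq_sigma_sets[OF Int_stable_outside_cylinders
        outside_cylinders_subset_sets _ cyl_int _ g_int uniform_spec_nonneg])
    show "space \<nu> \<in> outside_cylinders \<nu> \<Lambda>"
      unfolding outside_cylinders_def by (intro UnI1 CollectI exI[of _ "{}"] exI) simp
    show "A \<in> sigma_sets (space \<nu>) (outside_cylinders \<nu> \<Lambda>)"
      using that by (simp add: sigma_sets_outside_cylinders)
    show "(\<integral>x. indicator B x * indicator (cylinder \<nu> \<Lambda> \<xi>) x \<partial>\<nu>) = (\<integral>x. indicator B x * ?g x \<partial>\<nu>)"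
      if "B \<in> outside_cylinders \<nu> \<Lambda>" for B
    proof -
      from that have "B = {} \<or> (\<exists>C \<beta>. B = {\<omega> \<in> space \<nu>. \<forall>e\<in>C. \<omega> e = \<beta> e} \<and>
          finite C \<and> C \<inter> \<Lambda> = {})"
        by (auto simp: outside_cylinders_def)
      then show ?thesis using integral_cylinder_uniform_spec[OF assms] by auto
    qed
  qed (simp add: indicator_def)
  then show ?thesis
    using g_int cyl_int uniform_spec_measurable[OF assms]
    by (intro real_cond_exp_charact) (simp_all add: set_lebesgue_integral_def)
qed

end

theorem lemma6:
  fixes \<nu> :: "config measure"
  assumes "prob_space \<nu>"
    and "sets \<nu> = sets Omega_M"
    and "\<And>\<Lambda>. finite \<Lambda> \<Longrightarrow> I_fun \<Lambda> \<nu> = 0"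
  shows "gibbs \<nu>"
proof -
  interpret I_vanishing \<nu>
    using assms by (simp add: I_vanishing_def I_vanishing_axioms_def)
  have "AE \<omega> in \<nu>. real_cond_exp \<nu> (outside_alg \<nu> \<Lambda>) (indicator (cylinder \<nu> \<Lambda> \<xi>)) \<omega>
      = (if \<xi> \<in> compat_out \<Lambda> \<omega> then 1 / real (card (compat_out \<Lambda> \<omega>)) else 0)"
    if "finite \<Lambda>" for \<Lambda> \<xi>
    using cond_exp_cylinder[OF that, of \<xi>] AE_space
    by eventually_elim (simp add: space_eq compat_out_eq_compat_bdry uniform_spec_def)
  then show ?thesis
    using assms(1,2) by (simp add: gibbs_def cylinder_def)
qed

end
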